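(* Let $\Sigma=\{0,1\}$ and $D=\Sigma(\Sigma\Sigma)^*\setminus\left(\Sigma^*11\Sigma^*\cup000\Sigma^*\cup101\Sigma^*\right)$. The map $\mathrm{val}_{\mathcal{F}c}$ is an increasing bijection from $(D,\prec)$ to $(\mathbb{Z},<)$.
   Context: Fibonacci numbers: $F_0=1$, $F_1=2$, $F_n=F_{n-1}+F_{n-2}$ for $n\ge2$. For a nonempty binary word $w=w_{k-1}\cdots w_0$ (digits indexed from the right), $\mathrm{val}_{\mathcal{F}c}(w)=\sum_{i=0}^{k-1}w_iF_i-w_{k-1}F_k$. Orders: $u<_{rad}v$ iff $|u|<|v|$, or $|u|=|v|$ and $u<_{lex}v$; $u<_{rev}v$ iff $|u|>|v|$, or $|u|=|v|$ and $u<_{lex}v$. The total order $\prec$ on $\Sigma^*$: $u\prec v$ iff either $u\in1\Sigma^*$ and $v\in0\Sigma^*$; or $u,v\in0\Sigma^*$ and $u<_{rad}v$; or $u,v\in1\Sigma^*$ and $u<_{rev}v$. *)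

theory Defs
  imports Main
begin

text \<open>Binary words over \<Sigma> = {0,1} are lists of naturals with entries in {0,1},
  written most significant digit first: the list [w_{k-1}, ..., w_0].\<close>

definition words :: "nat list set" where
  "words = {w. set w \<subseteq> {0, 1}}"

fun fibc :: "nat \<Rightarrow> int" where
  "fibc 0 = 1"
| "fibc (Suc 0) = 2"
| "fibc (Suc (Suc n)) = fibc (Suc n) + fibc n"

definition digit :: "nat list \<Rightarrow> nat \<Rightarrow> nat" where
  "digit w i = w ! (length w - 1 - i)"

definition valFc :: "nat list \<Rightarrow> int" where
  "valFc w = (\<Sum>i<length w. int (digit w i) * fibc i)
             - int (digit w (length w - 1)) * fibc (length w)"

definition factor :: "nat list \<Rightarrow> nat list \<Rightarrow> bool" where
  "factor x w \<longleftrightarrow> (\<exists>p s. w = p @ x @ s)"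

definition starts_with :: "nat list \<Rightarrow> nat list \<Rightarrow> bool" where
  "starts_with x w \<longleftrightarrow> (\<exists>s. w = x @ s)"

definition D :: "nat list set" where
  "D = {w \<in> words. odd (length w) \<and> \<not> factor [1,1] w
         \<and> \<not> starts_with [0,0,0] w \<and> \<not> starts_with [1,0,1] w}"

definition lex_less :: "nat list \<Rightarrow> nat list \<Rightarrow> bool" where
  "lex_less u v \<longleftrightarrow> (\<exists>p a b u' v'. u = p @ a # u' \<and> v = p @ b # v' \<and> a < b)"

definition rad_less :: "nat list \<Rightarrow> nat list \<Rightarrow> bool" where
  "rad_less u v \<longleftrightarrow> length u < length v \<or> (length u = length v \<and> lex_less u v)"

definition rev_less :: "nat list \<Rightarrow> nat list \<Rightarrow> bool" where
  "rev_less u v \<longleftrightarrow> length u > length v \<or> (length u = length v \<and> lex_less u v)"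

definition prec :: "nat list \<Rightarrow> nat list \<Rightarrow> bool" where
  "prec u v \<longleftrightarrow>
     (u \<in> words \<and> v \<in> words) \<and>
     ((starts_with [1] u \<and> starts_with [0] v)
      \<or> (starts_with [0] u \<and> starts_with [0] v \<and> rad_less u v)
      \<or> (starts_with [1] u \<and> starts_with [1] v \<and> rev_less u v))"

end

(*
  Splitting off the leading digit, valFc (0 r) = N r and valFc (1 r) = N r - F_{|r|-1}, where
  N r = \<Sum> r_i F_i is the Zeckendorf value of r.  Since a Zeckendorf word w satisfies
  N w < F_{|w|}, the words 0 r of D (r of even length, no leading 00) have values in
  [F_{|r|-2}, F_{|r|}), and the words 1 0 0 s of D have values in [-F_{|s|+1}, F_{|s|} - F_{|s|+1});
  besides these there are only the words 0 and 1, of values 0 and -1.  These blocks tile the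
  integers in the order in which \<prec> lists them, and inside a block the value is
  lexicographically monotone, again by the Zeckendorf bound.  As \<prec> is total, this gives
  injectivity.  For surjectivity take a Zeckendorf representation of x (resp. of x + F_k, k odd)
  and strip leading pairs 00 (resp. 10), which changes neither N r nor N t - F_{|t|}.
*)

theory Submission
  imports Defs
begin

lemma fibc_pos: "0 < fibc n"
  by (induction n rule: fibc.induct) auto

lemma strict_mono_fibc: "strict_mono fibc"
  unfolding strict_mono_Suc_iff
proof
  fix n show "fibc n < fibc (Suc n)"
    by (cases n) (simp_all add: fibc_pos)
qed

lemma fibc_gt: "int n < fibc n"
  by (induction n rule: fibc.induct) (auto simp: fibc_pos add_strict_increasing)

fun fib_val :: "nat list \<Rightarrow> int" where
  "fib_val [] = 0"
| "fib_val (a # w) = int a * fibc (length w) + fib_val w"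

fun no_11 :: "nat list \<Rightarrow> bool" where
  "no_11 (a # b # w) \<longleftrightarrow> \<not> (a = 1 \<and> b = 1) \<and> no_11 (b # w)"
| "no_11 _ \<longleftrightarrow> True"

lemma no_11_ConsD: "no_11 (a # w) \<Longrightarrow> no_11 w"
  by (cases w) auto

lemma no_11_Cons_0 [simp]: "no_11 (0 # w) \<longleftrightarrow> no_11 w"
  by (cases w) auto

lemma factor_Nil: "factor x [] \<longleftrightarrow> x = []"
  by (simp add: factor_def)

lemma factor_Cons: "factor x (a # w) \<longleftrightarrow> starts_with x (a # w) \<or> factor x w"
  unfolding factor_def starts_with_def by (auto simp: Cons_eq_append_conv)

lemma factor_11_iff: "factor [1, 1] w \<longleftrightarrow> \<not> no_11 w"
  by (induction w rule: no_11.induct) (auto simp: factor_Cons factor_Nil starts_with_def)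

lemma fib_val_nonneg: "0 \<le> fib_val w"
  by (induction w) (simp_all add: fibc_pos less_imp_le)

lemma fib_val_lt_fibc: "set w \<subseteq> {0, 1} \<Longrightarrow> no_11 w \<Longrightarrow> fib_val w < fibc (length w)"
proof (induction w rule: induct_list012)
  case (3 a b w)
  show ?case
  proof (cases "a = 0")
    case True
    then have "fib_val (a # b # w) = fib_val (b # w)"
      by simp
    also have "\<dots> < fibc (length (b # w))"
      using 3 by (auto dest: no_11_ConsD)
    also have "\<dots> < fibc (length (a # b # w))"
      by (simp add: fibc_pos)
    finally show ?thesis .
  next
    case False
    with "3.prems" have "a = 1" "b = 0"
      by auto
    moreover have "fib_val w < fibc (length w)"
      using 3 by (auto dest: no_11_ConsD)
    ultimately show ?thesis
      by simp
  qed
qed (auto simp: fibc_pos)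

lemma fibc_le_fib_val:
  assumes "set w \<subseteq> {0, 1}" "\<not> starts_with [0, 0] w" "length w = n + 2"
  shows "fibc n \<le> fib_val w"
proof -
  obtain a b v where w: "w = a # b # v" and "length v = n"
    using assms(3) by (cases w rule: remdups_adj.cases) auto
  have "a = 1 \<or> b = 1"
    using assms(1,2) w by (auto simp: starts_with_def)
  then show ?thesis
    using w \<open>length v = n\<close> fib_val_nonneg[of v] fib_val_nonneg[of "b # v"] fibc_pos[of "Suc n"]
      strict_mono_less_eq[OF strict_mono_fibc, of n "Suc n"]
    by auto
qed

lemma zeckendorf_exists:
  "0 \<le> x \<Longrightarrow> x < fibc k \<Longrightarrow>
    \<exists>w. length w = k \<and> set w \<subseteq> {0, 1} \<and> no_11 w \<and> fib_val w = x"
proof (induction k arbitrary: x rule: fibc.induct)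
  case 1
  then show ?case
    by (intro exI[of _ "[]"]) simp
next
  case 2
  then have "x = 0 \<or> x = 1"
    by auto
  then show ?case
    by (intro exI[of _ "[nat x]"]) auto
next
  case (3 n)
  show ?case
  proof (cases "x < fibc (Suc n)")
    case True
    then obtain w where "length w = Suc n" "set w \<subseteq> {0, 1}" "no_11 w" "fib_val w = x"
      using "3.IH"(1) "3.prems" by blast
    then show ?thesis
      by (intro exI[of _ "0 # w"]) simp
  next
    case False
    then obtain w where "length w = n" "set w \<subseteq> {0, 1}" "no_11 w" "fib_val w = x - fibc (Suc n)"
      using "3.IH"(2)[of "x - fibc (Suc n)"] "3.prems" by auto
    then show ?thesis
      by (intro exI[of _ "1 # 0 # w"]) simp
  qed
qed

lemma lex_less_Cons_Cons: "lex_less (a # u) (b # v) \<longleftrightarrow> a < b \<or> (a = b \<and> lex_less u v)"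
proof
  assume "lex_less (a # u) (b # v)"
  then obtain p c d u' v' where "a # u = p @ c # u'" "b # v = p @ d # v'" "c < d"
    unfolding lex_less_def by blast
  then show "a < b \<or> (a = b \<and> lex_less u v)"
    unfolding lex_less_def by (cases p) auto
next
  assume "a < b \<or> (a = b \<and> lex_less u v)"
  then show "lex_less (a # u) (b # v)"
    unfolding lex_less_def by (metis append_Cons append_Nil)
qed

lemma lex_less_total: "length u = length v \<Longrightarrow> u \<noteq> v \<Longrightarrow> lex_less u v \<or> lex_less v u"
proof (induction u arbitrary: v)
  case (Cons a u)
  then obtain b v' where "v = b # v'"
    by (cases v) auto
  with Cons show ?case
    by (cases a b rule: linorder_cases) (auto simp: lex_less_Cons_Cons)
qed simp

lemma lex_less_imp_fib_val_less:
  assumes "lex_less u v" "length u = length v" "set u \<subseteq> {0, 1}" "set v \<subseteq> {0, 1}" "no_11 u"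
  shows "fib_val u < fib_val v"
  using assms
proof (induction u arbitrary: v)
  case (Cons a u)
  then obtain b v' where v: "v = b # v'" and len: "length u = length v'"
    by (cases v) auto
  show ?case
  proof (cases "a < b")
    case True
    with Cons.prems v have "a = 0" "b = 1"
      by auto
    moreover have "fib_val u < fibc (length u)"
      using fib_val_lt_fibc[of u] Cons.prems by (auto dest: no_11_ConsD)
    ultimately show ?thesis
      using v len fib_val_nonneg[of v'] by simp
  next
    case False
    with Cons.prems v have "a = b" "fib_val u < fib_val v'"
      using Cons.IH[of v'] by (auto simp: lex_less_Cons_Cons dest: no_11_ConsD)
    then show ?thesis
      using v len by simp
  qed
qed (simp add: lex_less_def)

lemma digit_sum_eq_fib_val: "(\<Sum>i<length w. int (digit w i) * fibc i) = fib_val w"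
proof (induction w)
  case (Cons a w)
  have "digit (a # w) i = digit w i" if "i < length w" for i
    using that by (simp add: digit_def nth_Cons')
  moreover have "digit (a # w) (length w) = a"
    by (simp add: digit_def)
  ultimately show ?case
    using Cons.IH by (simp add: lessThan_Suc)
qed simp

lemma valFc_Cons:
  "valFc (a # w) = fib_val w - int a * (fibc (Suc (length w)) - fibc (length w))"
  unfolding valFc_def digit_sum_eq_fib_val by (simp add: digit_def algebra_simps)

lemma valFc_Cons_0: "valFc (0 # r) = fib_val r"
  by (simp add: valFc_Cons)

lemma valFc_Cons_1_0_0: "valFc (1 # 0 # 0 # s) = fib_val s - fibc (Suc (length s))"
  by (simp add: valFc_Cons)

lemma starts_with_singleton: "starts_with [c] w \<longleftrightarrow> (\<exists>r. w = c # r)"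
  by (simp add: starts_with_def)

lemma Cons_0_in_D:
  "0 # r \<in> D \<longleftrightarrow> set r \<subseteq> {0, 1} \<and> no_11 r \<and> even (length r) \<and> \<not> starts_with [0, 0] r"
  unfolding D_def words_def factor_11_iff by (auto simp: starts_with_def)

lemma Cons_1_in_D:
  "1 # r \<in> D \<longleftrightarrow> r = [] \<or> (\<exists>s. r = 0 # 0 # s \<and> set s \<subseteq> {0, 1} \<and> no_11 s \<and> even (length s))"
  unfolding D_def words_def factor_11_iff
  by (cases r rule: remdups_adj.cases) (auto simp: starts_with_def)

lemma Cons_in_D_tail: "a # r \<in> D \<Longrightarrow> set r \<subseteq> {0, 1} \<and> no_11 r"
  unfolding D_def words_def factor_11_iff by (auto dest: no_11_ConsD)

lemma valFc_Cons_1_0_0_bounds: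
  assumes "set s \<subseteq> {0, 1}" "no_11 s"
  shows "- fibc (Suc (length s)) \<le> valFc (1 # 0 # 0 # s)"
    and "valFc (1 # 0 # 0 # s) < fibc (length s) - fibc (Suc (length s))"
  using fib_val_nonneg[of s] fib_val_lt_fibc[OF assms] unfolding valFc_Cons_1_0_0 by simp_all

lemma valFc_Cons_1_neg:
  assumes "1 # r \<in> D"
  shows "valFc (1 # r) < 0"
proof -
  from assms consider "r = []" | s where "r = 0 # 0 # s" "set s \<subseteq> {0, 1}" "no_11 s"
    unfolding Cons_1_in_D by blast
  then show ?thesis
  proof cases
    case (2 s)
    then show ?thesis
      using valFc_Cons_1_0_0_bounds(2)[of s]
        strict_mono_less[OF strict_mono_fibc, of "length s" "Suc (length s)"]
      by simp
  qed (simp add: valFc_Cons)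
qed

lemma valFc_Cons_0_less_of_length:
  assumes "0 # r \<in> D" "0 # r' \<in> D" "length r < length r'"
  shows "valFc (0 # r) < valFc (0 # r')"
proof -
  have r: "set r \<subseteq> {0, 1}" "no_11 r" "even (length r)"
    and r': "set r' \<subseteq> {0, 1}" "\<not> starts_with [0, 0] r'" "even (length r')"
    using assms(1,2) unfolding Cons_0_in_D by blast+
  have "length r + 2 \<le> length r'"
    using assms(3) r(3) r'(3) by presburger
  then obtain n where n: "length r' = n + 2" "length r \<le> n"
    by (intro that[of "length r' - 2"]) auto
  have "valFc (0 # r) < fibc (length r)"
    using fib_val_lt_fibc[OF r(1,2)] by (simp add: valFc_Cons_0)
  also have "\<dots> \<le> fibc n"
    using n(2) strict_mono_fibc by (simp add: strict_mono_less_eq)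
  also have "\<dots> \<le> valFc (0 # r')"
    using fibc_le_fib_val[OF r'(1,2) n(1)] by (simp add: valFc_Cons_0)
  finally show ?thesis .
qed

lemma valFc_Cons_1_less_of_length:
  assumes "1 # r \<in> D" "1 # r' \<in> D" "length r' < length r"
  shows "valFc (1 # r) < valFc (1 # r')"
proof -
  obtain s where r: "r = 0 # 0 # s" "set s \<subseteq> {0, 1}" "no_11 s" "even (length s)"
    using assms(1,3) unfolding Cons_1_in_D by auto
  have upper: "valFc (1 # r) < fibc (length s) - fibc (Suc (length s))"
    using valFc_Cons_1_0_0_bounds(2)[OF r(2,3)] r(1) by simp
  from assms(2) consider "r' = []"
    | s' where "r' = 0 # 0 # s'" "set s' \<subseteq> {0, 1}" "no_11 s'" "even (length s')"
    unfolding Cons_1_in_D by blast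
  then show ?thesis
  proof cases
    case 1
    have "fibc (length s) - fibc (Suc (length s)) \<le> -1"
      using strict_mono_less[OF strict_mono_fibc, of "length s" "Suc (length s)"] by simp
    with upper 1 show ?thesis
      by (simp add: valFc_Cons)
  next
    case (2 s')
    have "length s' < length s"
      using assms(3) r(1) 2(1) by simp
    then have "length s' + 2 \<le> length s"
      using r(4) 2(4) by presburger
    then obtain k where k: "length s = Suc k" "Suc (length s') \<le> k"
      by (intro that[of "length s - 1"]) auto
    have "fibc (length s) - fibc (Suc (length s)) = - fibc k"
      using k(1) by simp
    also have "\<dots> \<le> - fibc (Suc (length s'))"
      using k(2) strict_mono_fibc by (simp add: strict_mono_less_eq)
    also have "\<dots> \<le> valFc (1 # r')"
      using valFc_Cons_1_0_0_bounds(1)[OF 2(2,3)] 2(1) by simp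
    finally show ?thesis
      using upper by simp
  qed
qed

lemma valFc_Cons_less_of_lex_less:
  assumes "c # r \<in> D" "c # r' \<in> D" "length r = length r'" "lex_less r r'"
  shows "valFc (c # r) < valFc (c # r')"
  using lex_less_imp_fib_val_less[OF assms(4,3)] Cons_in_D_tail[OF assms(1)]
    Cons_in_D_tail[OF assms(2)] assms(3)
  by (simp add: valFc_Cons)

lemma valFc_less_of_prec:
  assumes "u \<in> D" "v \<in> D" "prec u v"
  shows "valFc u < valFc v"
proof -
  from assms(3) consider
      (head_10) r r' where "u = 1 # r" "v = 0 # r'"
    | (head_00) r r' where "u = 0 # r" "v = 0 # r'" "rad_less u v"
    | (head_11) r r' where "u = 1 # r" "v = 1 # r'" "rev_less u v"
    unfolding prec_def starts_with_singleton by blast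
  then show ?thesis
  proof cases
    case head_10
    then show ?thesis
      using valFc_Cons_1_neg[of r] assms(1) fib_val_nonneg[of r'] by (simp add: valFc_Cons_0)
  next
    case head_00
    then have "length r < length r' \<or> length r = length r' \<and> lex_less r r'"
      by (simp add: rad_less_def lex_less_Cons_Cons)
    then show ?thesis
      using head_00 assms(1,2) valFc_Cons_0_less_of_length valFc_Cons_less_of_lex_less by blast
  next
    case head_11
    then have "length r' < length r \<or> length r = length r' \<and> lex_less r r'"
      by (simp add: rev_less_def lex_less_Cons_Cons)
    then show ?thesis
      using head_11 assms(1,2) valFc_Cons_1_less_of_length valFc_Cons_less_of_lex_less by blast
  qed
qed

lemma prec_total:
  assumes "u \<in> words" "v \<in> words" "u \<noteq> []" "v \<noteq> []" "u \<noteq> v"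
  shows "prec u v \<or> prec v u"
proof -
  obtain a r b r' where uv: "u = a # r" "v = b # r'"
    using assms(3,4) by (meson neq_Nil_conv)
  have "a \<in> {0, 1}" "b \<in> {0, 1}"
    using assms(1,2) uv by (auto simp: words_def)
  moreover have "a \<noteq> b \<or> length r \<noteq> length r' \<or> lex_less r r' \<or> lex_less r' r"
    using lex_less_total[of r r'] assms(5) uv by auto
  ultimately show ?thesis
    using assms(1,2)
    unfolding uv prec_def rad_less_def rev_less_def starts_with_singleton lex_less_Cons_Cons
    by auto
qed

lemma inj_on_valFc_D: "inj_on valFc D"
proof (rule inj_onI, rule ccontr)
  fix u v
  assume "u \<in> D" "v \<in> D" "valFc u = valFc v" "u \<noteq> v"
  moreover have "u \<in> words" "v \<in> words" "u \<noteq> []" "v \<noteq> []"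
    using \<open>u \<in> D\<close> \<open>v \<in> D\<close> by (auto simp: D_def)
  ultimately show False
    using prec_total[of u v] valFc_less_of_prec[of u v] valFc_less_of_prec[of v u] by auto
qed

lemma fib_val_in_valFc_image_D:
  "set r \<subseteq> {0, 1} \<Longrightarrow> no_11 r \<Longrightarrow> even (length r) \<Longrightarrow> fib_val r \<in> valFc ` D"
proof (induction r rule: induct_list012)
  case 1
  have "[0] \<in> D"
    unfolding Cons_0_in_D by (simp add: starts_with_def)
  then show ?case
    using valFc_Cons_0[of "[]"] by force
next
  case (3 a b r)
  show ?case
  proof (cases "a = 0 \<and> b = 0")
    case True
    then show ?thesis
      using 3 by auto
  next
    case False
    then have "0 # a # b # r \<in> D"
      using "3.prems" unfolding Cons_0_in_D by (simp add: starts_with_def)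
    then show ?thesis
      using valFc_Cons_0[of "a # b # r"] by force
  qed
qed simp

lemma valFc_Cons_1_0_0_in_image:
  assumes "set s \<subseteq> {0, 1}" "no_11 s" "even (length s)"
  shows "fib_val s - fibc (Suc (length s)) \<in> valFc ` D"
proof -
  have "1 # 0 # 0 # s \<in> D"
    using assms unfolding Cons_1_in_D by simp
  then show ?thesis
    using valFc_Cons_1_0_0[of s] by force
qed

lemma fib_val_minus_fibc_in_valFc_image_D:
  "set t \<subseteq> {0, 1} \<Longrightarrow> no_11 t \<Longrightarrow> odd (length t) \<Longrightarrow> fib_val t - fibc (length t) \<in> valFc ` D"
proof (induction t rule: induct_list012)
  case (2 a)
  show ?case
  proof (cases "a = 0")
    case True
    then show ?thesis
      using valFc_Cons_1_0_0_in_image[of "[]"] by simp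
  next
    case False
    with "2.prems" have "a = 1"
      by simp
    moreover have "[1] \<in> D"
      unfolding Cons_1_in_D by simp
    ultimately show ?thesis
      using valFc_Cons[of 1 "[]"] by force
  qed
next
  case (3 a b r)
  show ?case
  proof (cases "a = 0")
    case True
    then show ?thesis
      using valFc_Cons_1_0_0_in_image[of "b # r"] "3.prems" by simp
  next
    case False
    with "3.prems" have "a = 1" "b = 0"
      by auto
    then have "fib_val (a # b # r) - fibc (length (a # b # r)) = fib_val r - fibc (length r)"
      by simp
    moreover have "fib_val r - fibc (length r) \<in> valFc ` D"
      using "3.IH"(1) "3.prems" by (auto dest: no_11_ConsD)
    ultimately show ?thesis
      by metis
  qed
qed simp

lemma valFc_image_D: "valFc ` D = UNIV"
proof (intro set_eqI iffI UNIV_I)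
  fix x :: int
  show "x \<in> valFc ` D"
  proof (cases "0 \<le> x")
    case True
    then have "x < fibc (2 * nat x)"
      using fibc_gt[of "2 * nat x"] by simp
    then obtain r where "length r = 2 * nat x" "set r \<subseteq> {0, 1}" "no_11 r" "fib_val r = x"
      using zeckendorf_exists True by blast
    then show ?thesis
      using fib_val_in_valFc_image_D[of r] by simp
  next
    case False
    define k where "k = 2 * nat (- x) + 1"
    have "0 \<le> x + fibc k" "x + fibc k < fibc k"
      using False fibc_gt[of k] by (simp_all add: k_def)
    then obtain t where "length t = k" "set t \<subseteq> {0, 1}" "no_11 t" "fib_val t = x + fibc k"
      using zeckendorf_exists by blast
    then show ?thesis
      using fib_val_minus_fibc_in_valFc_image_D[of t] by (simp add: k_def)
  qed
qed

theorem lemma6p7: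
  shows "bij_betw valFc D (UNIV :: int set)
         \<and> (\<forall>u\<in>D. \<forall>v\<in>D. prec u v \<longrightarrow> valFc u < valFc v)"
  using inj_on_valFc_D valFc_image_D valFc_less_of_prec by (simp add: bij_betw_def)

end
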